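(* Let $\mathcal R\subset\mathcal G$ be finite with $\mathrm{id}\in\mathcal R$. Then the seminorms $\|\cdot\|_{\mathcal R}$ and $[\cdot]_{\mathcal R}$ on $U_{\mathrm{per}}$ are equivalent, i.e. there are constants $c,C>0$ with $c\|u\|_{\mathcal R}\le[u]_{\mathcal R}\le C\|u\|_{\mathcal R}$ for all $u\in U_{\mathrm{per}}$.
   Context: Euclidean group: $\mathrm E(n)$ consists of pairs $(A|b)$, $A\in\mathrm O(n)$, $b\in\mathbb R^n$, acting on $\mathbb R^n$ by $(A|b)\cdot x=Ax+b$, with product $(A_1|b_1)(A_2|b_2)=(A_1A_2|b_1+A_1b_2)$; $\mathrm{rot}(A|b)=A$, $\mathrm{trans}(A|b)=b$. A subgroup is discrete if all its orbits are discrete. Standing setting: $d=d_1+d_2$ with $d_1,d_2\in\mathbb N_0$; $\mathcal S<\mathrm E(d_2)$ is a space group (a discrete subgroup containing $d_2$ translations $(I|b)$ with linearly independent $b$'s) with translation subgroup $\mathcal T_{\mathcal S}$; for $A\in\mathrm O(d_1)$, $(B|b)\in\mathrm E(d_2)$ put $A\oplus(B|b)=(\mathrm{diag}(A,B)\,|\,(0,b))\in\mathrm E(d)$. $\mathcal G$ is a discrete subgroup of $\mathrm E(d)$ contained in $\{A\oplus s:A\in\mathrm O(d_1),s\in\mathcal S\}$ whose image under $\pi(A\oplus s)=s$ is all of $\mathcal S$. $\mathcal T\subset\mathcal G$ is a set such that $\pi|_{\mathcal T}$ is a bijection onto $\mathcal T_{\mathcal S}$. There is $m_0\in\mathbb N$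 such that $\mathcal T^N:=\{t^N:t\in\mathcal T\}$ is a normal subgroup of $\mathcal G$ iff $N\in\mathcal M:=m_0\mathbb N$; for such $N$, $\mathcal T^N\cong\mathbb Z^{d_2}$ has finite index in $\mathcal G$, and $\mathcal C_N\subset\mathcal G$ is a fixed set of representatives of $\mathcal G/\mathcal T^N$. A map $u$ on $\mathcal G$ is $\mathcal T^N$-periodic if $u(gt)=u(g)$ for all $g\in\mathcal G$, $t\in\mathcal T^N$, and periodic if it is $\mathcal T^N$-periodic for some $N\in\mathcal M$; $U_{\mathrm{per}}$ is the space of periodic $u:\mathcal G\to\mathbb R^d$. $x_0\in\mathbb R^d$ is such that $g\mapsto g\cdot x_0$ is injective on $\mathcal G$; with $d_{\mathrm{aff}}$ the dimension of the affine hull of $\mathcal G\cdot x_0$, it is assumed that $\mathcal G\cdot x_0\subset\{0_{d-d_{\mathrm{aff}}}\}\times\mathbb R^{d_{\mathrm{aff}}}$ and $\mathcal G$ acts trivially on $\mathbb R^{d-d_{\mathrm{aff}}}\times\{0_{d_{\mathrm{aff}}}\}$. Definitions: for $\mathcal R\subset\mathcal G$, $U_{\mathrm{trans}}(\mathcal R)=\{u:\mathcal R\to\mathbb R^d:\exists a\in\mathbb R^d\ \forall g\in\mathcal R:\ \mathrm{rot}(g)u(g)=a\}$, $U_{\mathrm{rot}}(\mathcal R)=\{u:\mathcal R\to\mathbb R^d:\exists S\in\mathrm{Skew}(d)\ \forall g\in\mathcal R:\ \mathrm{rot}(g)u(g)=S(g\cdot x_0-x_0)\}$, $U_{\mathrm{iso}}(\mathcal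 R)=U_{\mathrm{trans}}(\mathcal R)+U_{\mathrm{rot}}(\mathcal R)$. For finite $\mathcal R$, $(\mathbb R^d)^{\mathcal R}$ carries the norm $\|v\|=(\sum_{h\in\mathcal R}|v(h)|^2)^{1/2}$ and $\mathrm{dist}$ is the induced distance to a subspace. For $u\in U_{\mathrm{per}}$ $\mathcal T^N$-periodic: $\|u\|_{\mathcal R}=\big(\frac1{|\mathcal C_N|}\sum_{g\in\mathcal C_N}\mathrm{dist}(u(g\,\cdot)|_{\mathcal R},U_{\mathrm{iso}}(\mathcal R))^2\big)^{1/2}$; the discrete derivative is $\nabla_{\mathcal R}u(g)\in(\mathbb R^d)^{\mathcal R}$, $\nabla_{\mathcal R}u(g)(h)=u(gh)-\mathrm{rot}(h)^Tu(g)$; and $[u]_{\mathcal R}=\big(\frac1{|\mathcal C_N|}\sum_{g\in\mathcal C_N}\mathrm{dist}(\nabla_{\mathcal R}u(g),U_{\mathrm{rot}}(\mathcal R))^2\big)^{1/2}$. *)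

theory Defs
  imports Complex_Main "Jordan_Normal_Form.Matrix"
begin

type_synonym eucl = "real mat \<times> real vec"

definition orth :: "nat \<Rightarrow> real mat set" where
  "orth n = {A. A \<in> carrier_mat n n \<and> transpose_mat A * A = 1\<^sub>m n}"

definition Eucl :: "nat \<Rightarrow> eucl set" where
  "Eucl n = {(A, b). A \<in> orth n \<and> b \<in> carrier_vec n}"

definition rot :: "eucl \<Rightarrow> real mat" where "rot g = fst g"
definition trans :: "eucl \<Rightarrow> real vec" where "trans g = snd g"

definition emult :: "eucl \<Rightarrow> eucl \<Rightarrow> eucl" (infixl "\<star>" 70) where
  "g \<star> h = (rot g * rot h, trans g + rot g *\<^sub>v trans h)"

definition eone :: "nat \<Rightarrow> eucl" where "eone n = (1\<^sub>m n, 0\<^sub>v n)"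

definition einv :: "eucl \<Rightarrow> eucl" where
  "einv g = (transpose_mat (rot g), - (transpose_mat (rot g) *\<^sub>v trans g))"

definition act :: "eucl \<Rightarrow> real vec \<Rightarrow> real vec" where
  "act g x = rot g *\<^sub>v x + trans g"

fun epow :: "nat \<Rightarrow> eucl \<Rightarrow> nat \<Rightarrow> eucl" where
  "epow n g 0 = eone n"
| "epow n g (Suc k) = epow n g k \<star> g"

definition vnorm :: "real vec \<Rightarrow> real" where "vnorm v = sqrt (v \<bullet> v)"
definition vdist :: "real vec \<Rightarrow> real vec \<Rightarrow> real" where "vdist x y = vnorm (x - y)"

definition discrete_set :: "real vec set \<Rightarrow> bool" where
  "discrete_set P \<longleftrightarrow> (\<forall>y\<in>P. \<exists>e>0. \<forall>z\<in>P. z \<noteq> y \<longrightarrow> vdist z y \<ge> e)"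

definition is_subgroup :: "nat \<Rightarrow> eucl set \<Rightarrow> eucl set \<Rightarrow> bool" where
  "is_subgroup n H K \<longleftrightarrow> H \<subseteq> K \<and> eone n \<in> H \<and>
     (\<forall>g\<in>H. \<forall>h\<in>H. g \<star> h \<in> H) \<and> (\<forall>g\<in>H. einv g \<in> H)"

definition is_normal_subgroup :: "nat \<Rightarrow> eucl set \<Rightarrow> eucl set \<Rightarrow> bool" where
  "is_normal_subgroup n H K \<longleftrightarrow> is_subgroup n H K \<and>
     (\<forall>g\<in>K. \<forall>h\<in>H. g \<star> h \<star> einv g \<in> H)"

definition discrete_subgroup :: "nat \<Rightarrow> eucl set \<Rightarrow> bool" where
  "discrete_subgroup n H \<longleftrightarrow> is_subgroup n H (Eucl n) \<and>
     (\<forall>x\<in>carrier_vec n. discrete_set ((\<lambda>g. act g x) ` H))"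

definition lin_indep_vecs :: "nat \<Rightarrow> nat \<Rightarrow> (nat \<Rightarrow> real vec) \<Rightarrow> bool" where
  "lin_indep_vecs n k bs \<longleftrightarrow> (\<forall>i<k. bs i \<in> carrier_vec n) \<and>
     (\<forall>c :: nat \<Rightarrow> real. (\<forall>j<n. (\<Sum>i<k. c i * (bs i $ j)) = 0) \<longrightarrow> (\<forall>i<k. c i = 0))"

definition space_group :: "nat \<Rightarrow> eucl set \<Rightarrow> bool" where
  "space_group n S \<longleftrightarrow> discrete_subgroup n S \<and>
     (\<exists>bs. lin_indep_vecs n n bs \<and> (\<forall>i<n. (1\<^sub>m n, bs i) \<in> S))"

definition transl_subgroup :: "nat \<Rightarrow> eucl set \<Rightarrow> eucl set" where
  "transl_subgroup n S = {s \<in> S. rot s = 1\<^sub>m n}"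

definition dsum :: "nat \<Rightarrow> nat \<Rightarrow> real mat \<Rightarrow> eucl \<Rightarrow> eucl" where
  "dsum d1 d2 A s = (four_block_mat A (0\<^sub>m d1 d2) (0\<^sub>m d2 d1) (rot s), 0\<^sub>v d1 @\<^sub>v trans s)"

definition proj :: "nat \<Rightarrow> nat \<Rightarrow> eucl \<Rightarrow> eucl" where
  "proj d1 d2 g = (mat d2 d2 (\<lambda>(i, j). rot g $$ (d1 + i, d1 + j)), vec_last (trans g) d2)"

definition Tpow :: "nat \<Rightarrow> eucl set \<Rightarrow> nat \<Rightarrow> eucl set" where
  "Tpow n T N = (\<lambda>t. epow n t N) ` T"

definition aff_dimension :: "nat \<Rightarrow> real vec set \<Rightarrow> nat" where
  "aff_dimension n P = (GREATEST k. \<exists>p0\<in>P. \<exists>p. (\<forall>i<k. p i \<in> P) \<and>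
       lin_indep_vecs n k (\<lambda>i. p i - p0))"

definition periodic_wrt :: "eucl set \<Rightarrow> eucl set \<Rightarrow> (eucl \<Rightarrow> real vec) \<Rightarrow> bool" where
  "periodic_wrt G TN u \<longleftrightarrow> (\<forall>g\<in>G. \<forall>t\<in>TN. u (g \<star> t) = u g)"

text \<open>Spaces of functions R \<rightarrow> R^d (values outside R are irrelevant).\<close>
definition U_trans :: "nat \<Rightarrow> eucl set \<Rightarrow> (eucl \<Rightarrow> real vec) set" where
  "U_trans d R = {w. (\<forall>g\<in>R. w g \<in> carrier_vec d) \<and>
      (\<exists>a\<in>carrier_vec d. \<forall>g\<in>R. rot g *\<^sub>v w g = a)}"

definition skew :: "nat \<Rightarrow> real mat set" where
  "skew d = {S. S \<in> carrier_mat d d \<and> transpose_mat S = - S}"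

definition U_rot :: "nat \<Rightarrow> real vec \<Rightarrow> eucl set \<Rightarrow> (eucl \<Rightarrow> real vec) set" where
  "U_rot d x0 R = {w. (\<forall>g\<in>R. w g \<in> carrier_vec d) \<and>
      (\<exists>S\<in>skew d. \<forall>g\<in>R. rot g *\<^sub>v w g = S *\<^sub>v (act g x0 - x0))}"

definition U_iso :: "nat \<Rightarrow> real vec \<Rightarrow> eucl set \<Rightarrow> (eucl \<Rightarrow> real vec) set" where
  "U_iso d x0 R = {(\<lambda>g. w1 g + w2 g) | w1 w2. w1 \<in> U_trans d R \<and> w2 \<in> U_rot d x0 R}"

definition fnorm :: "eucl set \<Rightarrow> (eucl \<Rightarrow> real vec) \<Rightarrow> real" where
  "fnorm R v = sqrt (\<Sum>h\<in>R. (v h) \<bullet> (v h))"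

definition fdist :: "eucl set \<Rightarrow> (eucl \<Rightarrow> real vec) \<Rightarrow> (eucl \<Rightarrow> real vec) set \<Rightarrow> real" where
  "fdist R v U = Inf {fnorm R (\<lambda>h. v h - w h) | w. w \<in> U}"

definition disc_grad :: "eucl set \<Rightarrow> (eucl \<Rightarrow> real vec) \<Rightarrow> eucl \<Rightarrow> (eucl \<Rightarrow> real vec)" where
  "disc_grad R u g = (\<lambda>h. u (g \<star> h) - transpose_mat (rot h) *\<^sub>v u g)"

text \<open>The two seminorms, for a T^N-periodic u, with representatives CN of G/T^N.\<close>
definition seminormR :: "nat \<Rightarrow> real vec \<Rightarrow> eucl set \<Rightarrow> eucl set \<Rightarrow> (eucl \<Rightarrow> real vec) \<Rightarrow> real" where
  "seminormR d x0 R CN u = sqrt ((1 / real (card CN)) *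
      (\<Sum>g\<in>CN. (fdist R (\<lambda>h. u (g \<star> h)) (U_iso d x0 R))\<^sup>2))"

definition seminorm_grad :: "nat \<Rightarrow> real vec \<Rightarrow> eucl set \<Rightarrow> eucl set \<Rightarrow> (eucl \<Rightarrow> real vec) \<Rightarrow> real" where
  "seminorm_grad d x0 R CN u = sqrt ((1 / real (card CN)) *
      (\<Sum>g\<in>CN. (fdist R (disc_grad R u g) (U_rot d x0 R))\<^sup>2))"

end

theory Submission
  imports Defs "HOL-Analysis.L2_Norm" "Jordan_Normal_Form.Determinant"
begin

text \<open>Fix \<open>g\<close> and put \<open>w = u(g \<cdot>)\<close> on \<open>R\<close>. Because \<open>id \<in> R\<close>, the discrete derivative
  is \<open>\<nabla>u(g) = w - \<tau>\<close> with \<open>\<tau>(h) = rot(h)\<^sup>T w(id)\<close>, and \<open>\<tau>\<close> lies in \<open>U_trans\<close>;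
  conversely every \<open>v \<in> U_trans\<close> is \<open>rot(\<cdot>)\<^sup>T v(id)\<close>, and every element of \<open>U_rot\<close>
  vanishes at \<open>id\<close>. Subtracting \<open>\<tau>\<close> therefore turns approximations of \<open>\<nabla>u(g)\<close> in
  \<open>U_rot\<close> into approximations of \<open>w\<close> in \<open>U_iso\<close> with the same error, which gives the lower
  bound with constant 1. If \<open>w\<^sub>1 + w\<^sub>2 \<in> U_iso\<close> approximates \<open>w\<close> with error \<open>e\<close>, then \<open>w\<^sub>2\<close>
  approximates \<open>\<nabla>u(g)\<close> with error \<open>e - rot(\<cdot>)\<^sup>T e(id)\<close>, of norm at most \<open>(1 + \<surd>|R|) \<parallel>e\<parallel>\<close>.
  Both pointwise bounds survive averaging the squares over \<open>C\<^sub>N\<close>.\<close>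

lemma orth_carrier_mat: "Q \<in> orth n \<Longrightarrow> Q \<in> carrier_mat n n"
  by (simp add: orth_def)

lemma orth_mult_transpose:
  assumes "Q \<in> orth n"
  shows "Q * transpose_mat Q = 1\<^sub>m n"
proof -
  have Q: "Q \<in> carrier_mat n n" and "transpose_mat Q * Q = 1\<^sub>m n"
    using assms by (auto simp: orth_def)
  then show ?thesis by (intro mat_mult_left_right_inverse[OF _ Q]) auto
qed

lemma orth_mult_transpose_vec:
  assumes "Q \<in> orth n" "a \<in> carrier_vec n"
  shows "Q *\<^sub>v (transpose_mat Q *\<^sub>v a) = a"
proof -
  have "Q \<in> carrier_mat n n" using assms(1) by (rule orth_carrier_mat)
  then have "Q *\<^sub>v (transpose_mat Q *\<^sub>v a) = (Q * transpose_mat Q) *\<^sub>v a"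
    using assms(2) by simp
  then show ?thesis using orth_mult_transpose[OF assms(1)] assms(2) by simp
qed

lemma orth_transpose_mult_vec:
  assumes "Q \<in> orth n" "v \<in> carrier_vec n"
  shows "transpose_mat Q *\<^sub>v (Q *\<^sub>v v) = v"
proof -
  have "Q \<in> carrier_mat n n" "transpose_mat Q * Q = 1\<^sub>m n"
    using assms(1) by (auto simp: orth_def)
  then show ?thesis using assms(2) by (simp flip: assoc_mult_mat_vec)
qed

lemma orth_transpose_scalar_prod_self:
  assumes "Q \<in> orth n" "a \<in> carrier_vec n"
  shows "(transpose_mat Q *\<^sub>v a) \<bullet> (transpose_mat Q *\<^sub>v a) = a \<bullet> a"
proof -
  have Q: "Q \<in> carrier_mat n n" using assms(1) by (rule orth_carrier_mat)
  have "(transpose_mat Q *\<^sub>v a) \<bullet> (transpose_mat Q *\<^sub>v a) = a \<bullet> (Q *\<^sub>v (transpose_mat Q *\<^sub>v a))"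
    using Q assms(2) by (intro transpose_vec_mult_scalar) auto
  then show ?thesis using orth_mult_transpose_vec[OF assms] by simp
qed

lemma Eucl_rot: "g \<in> Eucl n \<Longrightarrow> rot g \<in> orth n"
  by (auto simp: Eucl_def rot_def)

lemma Eucl_trans: "g \<in> Eucl n \<Longrightarrow> trans g \<in> carrier_vec n"
  by (auto simp: Eucl_def trans_def)

lemma rot_eone [simp]: "rot (eone n) = 1\<^sub>m n"
  and trans_eone [simp]: "trans (eone n) = 0\<^sub>v n"
  by (simp_all add: rot_def trans_def eone_def)

lemma emult_eone_right:
  assumes "g \<in> Eucl n"
  shows "g \<star> eone n = g"
proof -
  have "rot g \<in> carrier_mat n n" "trans g \<in> carrier_vec n"
    using assms by (auto intro: orth_carrier_mat Eucl_rot Eucl_trans)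
  then show ?thesis by (cases g) (auto simp: emult_def eone_def rot_def trans_def)
qed

lemma transpose_rot_mult_vec_carrier:
  assumes "h \<in> Eucl n" "v \<in> carrier_vec n"
  shows "transpose_mat (rot h) *\<^sub>v v \<in> carrier_vec n"
  using orth_carrier_mat[OF Eucl_rot[OF assms(1)]] assms(2) by auto

lemma act_minus_carrier:
  assumes "h \<in> Eucl n" "x \<in> carrier_vec n"
  shows "act h x - x \<in> carrier_vec n"
  using orth_carrier_mat[OF Eucl_rot[OF assms(1)]] Eucl_trans[OF assms(1)] assms(2)
  by (auto simp: act_def)

lemma mult_mat_vec_zero: "A \<in> carrier_mat m n \<Longrightarrow> A *\<^sub>v 0\<^sub>v n = 0\<^sub>v m"
  by (intro eq_vecI) auto

lemma scalar_prod_self_nonneg: "0 \<le> (v :: real vec) \<bullet> v"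
  unfolding scalar_prod_def by (auto intro: sum_nonneg)

lemma fnorm_cong: "(\<And>h. h \<in> R \<Longrightarrow> v h = v' h) \<Longrightarrow> fnorm R v = fnorm R v'"
  unfolding fnorm_def by (simp cong: sum.cong)

lemma fnorm_nonneg: "0 \<le> fnorm R v"
  unfolding fnorm_def by (simp add: sum_nonneg scalar_prod_self_nonneg)

lemma fnorm_eq_L2_set:
  assumes "\<And>h. h \<in> R \<Longrightarrow> v h \<in> carrier_vec n"
  shows "fnorm R v = L2_set (\<lambda>(h, i). v h $ i) (R \<times> {..<n})"
proof -
  have "v h \<bullet> v h = (\<Sum>i<n. (v h $ i)\<^sup>2)" if "h \<in> R" for h
    using assms[OF that] by (auto simp: scalar_prod_def power2_eq_square lessThan_atLeast0)
  then have "(\<Sum>h\<in>R. v h \<bullet> v h) = (\<Sum>h\<in>R. \<Sum>i<n. (v h $ i)\<^sup>2)"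
    by (rule sum.cong[OF refl])
  also have "\<dots> = (\<Sum>(h, i)\<in>R \<times> {..<n}. (v h $ i)\<^sup>2)"
    by (simp add: sum.cartesian_product)
  finally show ?thesis unfolding fnorm_def L2_set_def by (simp add: case_prod_beta)
qed

lemma fnorm_diff_le:
  assumes "\<And>h. h \<in> R \<Longrightarrow> x h \<in> carrier_vec n" "\<And>h. h \<in> R \<Longrightarrow> y h \<in> carrier_vec n"
  shows "fnorm R (\<lambda>h. x h - y h) \<le> fnorm R x + fnorm R y"
proof -
  let ?X = "\<lambda>(h, i). x h $ i" and ?Y = "\<lambda>(h, i). y h $ i"
  have "(x h - y h) $ i = x h $ i + - (y h $ i)" if "h \<in> R" "i < n" for h i
    using assms(1)[OF that(1)] assms(2)[OF that(1)] that(2) by simp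
  then have "fnorm R (\<lambda>h. x h - y h) = L2_set (\<lambda>p. ?X p + - ?Y p) (R \<times> {..<n})"
    using assms by (subst fnorm_eq_L2_set[where n = n]) (auto intro!: L2_set_cong)
  also have "\<dots> \<le> L2_set ?X (R \<times> {..<n}) + L2_set (\<lambda>p. - ?Y p) (R \<times> {..<n})"
    by (rule L2_set_triangle_ineq)
  also have "L2_set (\<lambda>p. - ?Y p) (R \<times> {..<n}) = L2_set ?Y (R \<times> {..<n})"
    unfolding L2_set_def by simp
  finally show ?thesis using assms by (simp add: fnorm_eq_L2_set[where n = n])
qed

lemma fnorm_member_le:
  assumes "finite R" "e \<in> R"
  shows "sqrt (v e \<bullet> v e) \<le> fnorm R v"
  unfolding fnorm_def using assms
  by (intro real_sqrt_le_mono member_le_sum) (auto simp: scalar_prod_self_nonneg)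

lemma fnorm_transpose_rot_const:
  assumes "R \<subseteq> Eucl n" "a \<in> carrier_vec n"
  shows "fnorm R (\<lambda>h. transpose_mat (rot h) *\<^sub>v a) = sqrt (real (card R)) * sqrt (a \<bullet> a)"
proof -
  have "(\<Sum>h\<in>R. (transpose_mat (rot h) *\<^sub>v a) \<bullet> (transpose_mat (rot h) *\<^sub>v a)) = (\<Sum>h\<in>R. a \<bullet> a)"
    using assms by (intro sum.cong orth_transpose_scalar_prod_self Eucl_rot) auto
  then show ?thesis unfolding fnorm_def by (simp add: real_sqrt_mult)
qed

lemma fdist_le_fnorm: "w \<in> U \<Longrightarrow> fdist R v U \<le> fnorm R (\<lambda>h. v h - w h)"
  unfolding fdist_def by (rule cInf_lower) (auto intro: bdd_belowI[where m = 0] simp: fnorm_nonneg)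

lemma fdist_greatest:
  "U \<noteq> {} \<Longrightarrow> (\<And>w. w \<in> U \<Longrightarrow> K \<le> fnorm R (\<lambda>h. v h - w h)) \<Longrightarrow> K \<le> fdist R v U"
  unfolding fdist_def by (rule cInf_greatest) auto

lemma fdist_nonneg: "U \<noteq> {} \<Longrightarrow> 0 \<le> fdist R v U"
  by (rule fdist_greatest) (auto simp: fnorm_nonneg)

lemma transpose_rot_const_in_U_trans:
  assumes "R \<subseteq> Eucl n" "a \<in> carrier_vec n"
  shows "(\<lambda>h. transpose_mat (rot h) *\<^sub>v a) \<in> U_trans n R"
  using assms transpose_rot_mult_vec_carrier orth_mult_transpose_vec[OF Eucl_rot]
  unfolding U_trans_def by blast

lemma U_trans_eq_transpose_rot_const:
  assumes "w \<in> U_trans n R" "R \<subseteq> Eucl n" "eone n \<in> R" "h \<in> R"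
  shows "w h = transpose_mat (rot h) *\<^sub>v w (eone n)"
proof -
  obtain a where "\<And>g. g \<in> R \<Longrightarrow> rot g *\<^sub>v w g = a" and wc: "\<And>g. g \<in> R \<Longrightarrow> w g \<in> carrier_vec n"
    using assms(1) unfolding U_trans_def by blast
  then have "rot h *\<^sub>v w h = w (eone n)"
    using assms(3,4) by (metis one_mult_mat_vec rot_eone)
  moreover have "rot h \<in> orth n" using assms(2,4) Eucl_rot by blast
  ultimately show ?thesis using orth_transpose_mult_vec wc[OF assms(4)] by metis
qed

lemma U_rot_eone:
  assumes "w \<in> U_rot n x0 R" "eone n \<in> R" "x0 \<in> carrier_vec n"
  shows "w (eone n) = 0\<^sub>v n"
proof -
  obtain S where S: "S \<in> skew n"
    and "rot (eone n) *\<^sub>v w (eone n) = S *\<^sub>v (act (eone n) x0 - x0)"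
    and "w (eone n) \<in> carrier_vec n"
    using assms(1,2) unfolding U_rot_def by blast
  moreover have "act (eone n) x0 - x0 = 0\<^sub>v n"
    using assms(3) by (intro eq_vecI) (auto simp: act_def)
  moreover have "S \<in> carrier_mat n n" using S by (simp add: skew_def)
  ultimately show ?thesis by (simp add: mult_mat_vec_zero)
qed

lemma zero_in_U_trans:
  assumes "R \<subseteq> Eucl n"
  shows "(\<lambda>_. 0\<^sub>v n) \<in> U_trans n R"
proof -
  have "rot g *\<^sub>v 0\<^sub>v n = 0\<^sub>v n" if "g \<in> R" for g
    using that assms orth_carrier_mat[OF Eucl_rot] by (blast intro: mult_mat_vec_zero)
  then show ?thesis unfolding U_trans_def by auto
qed

lemma zero_in_U_rot:
  assumes "R \<subseteq> Eucl n" "x0 \<in> carrier_vec n"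
  shows "(\<lambda>_. 0\<^sub>v n) \<in> U_rot n x0 R"
proof -
  have "0\<^sub>m n n \<in> skew n" unfolding skew_def by (auto intro!: eq_matI)
  moreover have "rot g *\<^sub>v 0\<^sub>v n = 0\<^sub>m n n *\<^sub>v (act g x0 - x0)" if "g \<in> R" for g
  proof -
    have "g \<in> Eucl n" using that assms(1) by blast
    then have "rot g \<in> carrier_mat n n" "act g x0 - x0 \<in> carrier_vec n"
      using assms(2) by (auto intro: orth_carrier_mat Eucl_rot act_minus_carrier)
    then show ?thesis by (intro eq_vecI) auto
  qed
  ultimately show ?thesis unfolding U_rot_def by auto
qed

lemma U_iso_nonempty: "R \<subseteq> Eucl n \<Longrightarrow> x0 \<in> carrier_vec n \<Longrightarrow> U_iso n x0 R \<noteq> {}"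
  using zero_in_U_trans zero_in_U_rot unfolding U_iso_def by blast

lemma fdist_U_iso_le_fdist_U_rot:
  assumes R: "R \<subseteq> Eucl n" "eone n \<in> R" and x0: "x0 \<in> carrier_vec n"
    and w: "\<And>h. h \<in> R \<Longrightarrow> w h \<in> carrier_vec n"
  shows "fdist R w (U_iso n x0 R)
    \<le> fdist R (\<lambda>h. w h - transpose_mat (rot h) *\<^sub>v w (eone n)) (U_rot n x0 R)"
proof (rule fdist_greatest)
  show "U_rot n x0 R \<noteq> {}" using zero_in_U_rot[OF R(1) x0] by blast
next
  fix z assume z: "z \<in> U_rot n x0 R"
  define \<tau> where "\<tau> h = transpose_mat (rot h) *\<^sub>v w (eone n)" for h
  have "\<tau> \<in> U_trans n R" unfolding \<tau>_def using R w by (intro transpose_rot_const_in_U_trans) auto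
  then have "(\<lambda>h. \<tau> h + z h) \<in> U_iso n x0 R" using z unfolding U_iso_def by blast
  then have "fdist R w (U_iso n x0 R) \<le> fnorm R (\<lambda>h. w h - (\<tau> h + z h))"
    by (rule fdist_le_fnorm)
  also have "\<dots> = fnorm R (\<lambda>h. (w h - \<tau> h) - z h)"
  proof (rule fnorm_cong)
    fix h assume h: "h \<in> R"
    have "\<tau> h \<in> carrier_vec n"
      unfolding \<tau>_def using h R w by (blast intro: transpose_rot_mult_vec_carrier)
    moreover have "z h \<in> carrier_vec n" using h z unfolding U_rot_def by blast
    ultimately show "w h - (\<tau> h + z h) = (w h - \<tau> h) - z h" using w[OF h] by (intro eq_vecI) auto
  qed
  finally show "fdist R w (U_iso n x0 R) \<le> fnorm R (\<lambda>h. (w h - \<tau> h) - z h)" .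
qed

lemma fnorm_grad_minus_U_rot_le:
  assumes R: "R \<subseteq> Eucl n" "finite R" "eone n \<in> R" and x0: "x0 \<in> carrier_vec n"
    and w: "\<And>h. h \<in> R \<Longrightarrow> w h \<in> carrier_vec n"
    and w1: "w1 \<in> U_trans n R" and w2: "w2 \<in> U_rot n x0 R"
  shows "fnorm R (\<lambda>h. w h - transpose_mat (rot h) *\<^sub>v w (eone n) - w2 h)
    \<le> (1 + sqrt (real (card R))) * fnorm R (\<lambda>h. w h - (w1 h + w2 h))"
proof -
  have w1c: "w1 h \<in> carrier_vec n" and w2c: "w2 h \<in> carrier_vec n" if "h \<in> R" for h
    using that w1 w2 unfolding U_trans_def U_rot_def by auto
  define e where "e h = w h - (w1 h + w2 h)" for h
  have ec: "e h \<in> carrier_vec n" if "h \<in> R" for h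
    using that w w1c w2c unfolding e_def by auto
  have e_eone: "e (eone n) = w (eone n) - w1 (eone n)"
    using R(3) w w1c unfolding e_def U_rot_eone[OF w2 R(3) x0] by (intro eq_vecI) auto
  have "fnorm R (\<lambda>h. w h - transpose_mat (rot h) *\<^sub>v w (eone n) - w2 h)
      = fnorm R (\<lambda>h. e h - transpose_mat (rot h) *\<^sub>v e (eone n))"
  proof (rule fnorm_cong)
    fix h assume h: "h \<in> R"
    let ?Qt = "transpose_mat (rot h)"
    have "h \<in> Eucl n" using h R(1) by blast
    then have Qt: "?Qt \<in> carrier_mat n n" using orth_carrier_mat[OF Eucl_rot] by simp
    then have Qt_e: "?Qt *\<^sub>v e (eone n) = ?Qt *\<^sub>v w (eone n) - w1 h"
      unfolding e_eone U_trans_eq_transpose_rot_const[OF w1 R(1,3) h]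
      using w[OF R(3)] w1c[OF R(3)] by (subst mult_minus_distrib_mat_vec) auto
    show "w h - ?Qt *\<^sub>v w (eone n) - w2 h = e h - ?Qt *\<^sub>v e (eone n)"
      unfolding Qt_e unfolding e_def using Qt w[OF h] w1c[OF h] w2c[OF h]
      by (intro eq_vecI) auto
  qed
  also have "\<dots> \<le> fnorm R e + fnorm R (\<lambda>h. transpose_mat (rot h) *\<^sub>v e (eone n))"
    using R ec[OF R(3)] ec by (intro fnorm_diff_le) (blast intro: transpose_rot_mult_vec_carrier)+
  also have "fnorm R (\<lambda>h. transpose_mat (rot h) *\<^sub>v e (eone n))
      = sqrt (real (card R)) * sqrt (e (eone n) \<bullet> e (eone n))"
    using R(1) ec[OF R(3)] by (rule fnorm_transpose_rot_const)
  also have "\<dots> \<le> sqrt (real (card R)) * fnorm R e"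
    using R by (intro mult_left_mono fnorm_member_le) auto
  finally show ?thesis unfolding e_def by (simp add: algebra_simps)
qed

lemma fdist_U_rot_le_fdist_U_iso:
  assumes R: "R \<subseteq> Eucl n" "finite R" "eone n \<in> R" and x0: "x0 \<in> carrier_vec n"
    and w: "\<And>h. h \<in> R \<Longrightarrow> w h \<in> carrier_vec n"
  shows "fdist R (\<lambda>h. w h - transpose_mat (rot h) *\<^sub>v w (eone n)) (U_rot n x0 R)
    \<le> (1 + sqrt (real (card R))) * fdist R w (U_iso n x0 R)"
proof -
  define K where "K = 1 + sqrt (real (card R))"
  have K: "K > 0" unfolding K_def by (simp add: add_pos_nonneg)
  let ?grad_w = "\<lambda>h. w h - transpose_mat (rot h) *\<^sub>v w (eone n)"
  have "fdist R ?grad_w (U_rot n x0 R) / K \<le> fdist R w (U_iso n x0 R)"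
  proof (rule fdist_greatest[OF U_iso_nonempty[OF R(1) x0]])
    fix w' assume "w' \<in> U_iso n x0 R"
    then obtain w1 w2 where w': "w' = (\<lambda>h. w1 h + w2 h)"
      and w1: "w1 \<in> U_trans n R" and w2: "w2 \<in> U_rot n x0 R"
      unfolding U_iso_def by blast
    have "fdist R ?grad_w (U_rot n x0 R) \<le> fnorm R (\<lambda>h. ?grad_w h - w2 h)"
      using w2 by (rule fdist_le_fnorm)
    also have "\<dots> \<le> K * fnorm R (\<lambda>h. w h - w' h)"
      unfolding K_def w' using fnorm_grad_minus_U_rot_le[OF R x0 w w1 w2] .
    finally show "fdist R ?grad_w (U_rot n x0 R) / K \<le> fnorm R (\<lambda>h. w h - w' h)"
      using K by (simp add: divide_simps mult.commute)
  qed
  then show ?thesis using K unfolding K_def by (simp add: divide_simps mult.commute)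
qed

lemma fdist_disc_grad_bounds:
  assumes R: "R \<subseteq> Eucl n" "finite R" "eone n \<in> R" and x0: "x0 \<in> carrier_vec n"
    and g: "g \<in> Eucl n" and u: "\<And>h. h \<in> R \<Longrightarrow> u (g \<star> h) \<in> carrier_vec n"
  shows "fdist R (\<lambda>h. u (g \<star> h)) (U_iso n x0 R) \<le> fdist R (disc_grad R u g) (U_rot n x0 R)"
    and "fdist R (disc_grad R u g) (U_rot n x0 R)
      \<le> (1 + sqrt (real (card R))) * fdist R (\<lambda>h. u (g \<star> h)) (U_iso n x0 R)"
proof -
  have "disc_grad R u g = (\<lambda>h. u (g \<star> h) - transpose_mat (rot h) *\<^sub>v u (g \<star> eone n))"
    using emult_eone_right[OF g] by (simp add: disc_grad_def)
  then show "fdist R (\<lambda>h. u (g \<star> h)) (U_iso n x0 R) \<le> fdist R (disc_grad R u g) (U_rot n x0 R)"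
    and "fdist R (disc_grad R u g) (U_rot n x0 R)
      \<le> (1 + sqrt (real (card R))) * fdist R (\<lambda>h. u (g \<star> h)) (U_iso n x0 R)"
    using fdist_U_iso_le_fdist_U_rot[OF R(1,3) x0 u] fdist_U_rot_le_fdist_U_iso[OF R x0 u] by simp_all
qed

lemma sqrt_scaled_sum_squares_le:
  fixes f g :: "'a \<Rightarrow> real"
  assumes "0 \<le> c" "0 \<le> K" "\<And>x. x \<in> A \<Longrightarrow> 0 \<le> f x" "\<And>x. x \<in> A \<Longrightarrow> f x \<le> K * g x"
  shows "sqrt (c * (\<Sum>x\<in>A. (f x)\<^sup>2)) \<le> K * sqrt (c * (\<Sum>x\<in>A. (g x)\<^sup>2))"
proof -
  have "(\<Sum>x\<in>A. (f x)\<^sup>2) \<le> (\<Sum>x\<in>A. (K * g x)\<^sup>2)"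
    using assms(3,4) by (intro sum_mono power_mono)
  also have "\<dots> = K\<^sup>2 * (\<Sum>x\<in>A. (g x)\<^sup>2)"
    by (simp add: power_mult_distrib sum_distrib_left)
  finally have "sqrt (c * (\<Sum>x\<in>A. (f x)\<^sup>2)) \<le> sqrt (K\<^sup>2 * (c * (\<Sum>x\<in>A. (g x)\<^sup>2)))"
    using assms(1) by (intro real_sqrt_le_mono) (simp add: mult_left_mono algebra_simps)
  then show ?thesis using assms(2) by (simp add: real_sqrt_mult)
qed

theorem proposition3p7:
  fixes d1 d2 d m0 :: nat
    and S G T :: "eucl set"
    and C :: "nat \<Rightarrow> eucl set"
    and x0 :: "real vec"
    and R :: "eucl set"
  assumes d_def: "d = d1 + d2"
    and S_space: "space_group d2 S"
    and G_discrete: "discrete_subgroup d G"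
    and G_sub: "G \<subseteq> {dsum d1 d2 A s | A s. A \<in> orth d1 \<and> s \<in> S}"
    and G_onto: "proj d1 d2 ` G = S"
    and T_sub: "T \<subseteq> G"
    and T_bij: "bij_betw (proj d1 d2) T (transl_subgroup d2 S)"
    and m0_pos: "m0 \<ge> 1"
    and m0_char: "\<forall>N\<ge>1. is_normal_subgroup d (Tpow d T N) G \<longleftrightarrow> m0 dvd N"
    and TN_lattice: "\<forall>N. N \<ge> 1 \<and> m0 dvd N \<longrightarrow>
        (\<exists>f :: (nat \<Rightarrow> int) \<Rightarrow> eucl. bij_betw f {k. \<forall>i\<ge>d2. k i = 0} (Tpow d T N) \<and>
           (\<forall>k l. (\<forall>i\<ge>d2. k i = 0) \<longrightarrow> (\<forall>i\<ge>d2. l i = 0) \<longrightarrow> f (\<lambda>i. k i + l i) = f k \<star> f l))"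
    and TN_finite_index: "\<forall>N. N \<ge> 1 \<and> m0 dvd N \<longrightarrow>
        finite ((\<lambda>g. (\<lambda>t. g \<star> t) ` Tpow d T N) ` G)"
    and C_reps: "\<forall>N. N \<ge> 1 \<and> m0 dvd N \<longrightarrow> C N \<subseteq> G \<and>
        (\<forall>g\<in>G. \<exists>!c. c \<in> C N \<and> (\<exists>t\<in>Tpow d T N. g = c \<star> t))"
    and x0_dim: "x0 \<in> carrier_vec d"
    and x0_inj: "inj_on (\<lambda>g. act g x0) G"
    and x0_aff: "\<exists>daff \<le> d. aff_dimension d ((\<lambda>g. act g x0) ` G) = daff \<and>
        (\<forall>g\<in>G. \<forall>i < d - daff. act g x0 $ i = 0) \<and>
        (\<forall>g\<in>G. \<forall>y\<in>carrier_vec d. (\<forall>i. d - daff \<le> i \<and> i < d \<longrightarrow> y $ i = 0) \<longrightarrow>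
            rot g *\<^sub>v y = y)"
    and R_fin: "finite R"
    and R_sub: "R \<subseteq> G"
    and R_id: "eone d \<in> R"
  shows "\<exists>c Cc. c > 0 \<and> Cc > 0 \<and>
    (\<forall>N u. N \<ge> 1 \<and> m0 dvd N \<longrightarrow> (\<forall>g\<in>G. u g \<in> carrier_vec d) \<longrightarrow>
       periodic_wrt G (Tpow d T N) u \<longrightarrow>
       c * seminormR d x0 R (C N) u \<le> seminorm_grad d x0 R (C N) u \<and>
       seminorm_grad d x0 R (C N) u \<le> Cc * seminormR d x0 R (C N) u)"
proof -
  have G: "G \<subseteq> Eucl d" using G_discrete by (simp add: discrete_subgroup_def is_subgroup_def)
  have G_mult: "g \<star> h \<in> G" if "g \<in> G" "h \<in> G" for g h
    using that G_discrete by (simp add: discrete_subgroup_def is_subgroup_def)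
  have R: "R \<subseteq> Eucl d" using R_sub G by blast
  define K where "K = 1 + sqrt (real (card R))"
  have bounds: "seminormR d x0 R (C N) u \<le> 1 * seminorm_grad d x0 R (C N) u \<and>
      seminorm_grad d x0 R (C N) u \<le> K * seminormR d x0 R (C N) u"
    if "N \<ge> 1 \<and> m0 dvd N" and u: "\<forall>g\<in>G. u g \<in> carrier_vec d" for N u
  proof -
    have CN: "C N \<subseteq> G" using C_reps that(1) by blast
    let ?a = "\<lambda>g. fdist R (\<lambda>h. u (g \<star> h)) (U_iso d x0 R)"
    let ?b = "\<lambda>g. fdist R (disc_grad R u g) (U_rot d x0 R)"
    have pointwise: "?a g \<le> ?b g" "?b g \<le> K * ?a g" if "g \<in> C N" for g
    proof -
      have gu: "g \<in> Eucl d" "\<And>h. h \<in> R \<Longrightarrow> u (g \<star> h) \<in> carrier_vec d"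
        using that CN G u G_mult R_sub by blast+
      show "?a g \<le> ?b g" "?b g \<le> K * ?a g"
        unfolding K_def using fdist_disc_grad_bounds[where u = u, OF R R_fin R_id x0_dim gu] by simp_all
    qed
    show ?thesis
      unfolding seminormR_def seminorm_grad_def
      using pointwise U_iso_nonempty[OF R x0_dim] zero_in_U_rot[OF R x0_dim]
      by (intro conjI sqrt_scaled_sum_squares_le) (auto simp: K_def intro: fdist_nonneg)
  qed
  show ?thesis by (rule exI[of _ 1], rule exI[of _ K]) (use bounds in \<open>auto simp: K_def add_pos_nonneg\<close>)
qed

end
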